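(* Let $f(z):=\sum_{j=0}^\infty p_j\frac{z^j}{j!}$ with complex $p_j$ satisfying $|p_j|\le(j+2)^{-2}$ for all $j\ge0$, let $n\in\mathbb{N}$ and $N=2n+1$. For each $n\ge1$ there exist pairwise distinct complex numbers $\lambda_1,\dots,\lambda_N$ with $|\lambda_k|=1$ such that for every $r\in(0,1)$, \[\left|\sum_{k=1}^N\lambda_ke^{\lambda_kz}-f(z)\right|\le\frac{|z|^n}{n!}\frac{15}{1-r^{n+1}}\left(n+\frac{2}{1-r}\right)\left(1+\frac{|z|e^{|z|/r}}{rn+r}\right)\qquad\text{for all }z\in\mathbb{C}.\] *)

theory Defs
  imports "HOL-Analysis.Analysis"
begin

end

theory Submission
  imports Defs "HOL-Computational_Algebra.Polynomial_FPS"
begin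

(* With c_m = p_(m-1) and N = 2n+1 it suffices to find N distinct points w on the unit circle
   whose power sums sum_w w^m equal c_m for 1 <= m <= n: then the Taylor coefficients of
   sum_w w e^(w z) - f(z) vanish below z^n and are at most (N+1)/j! beyond, and an exponential
   tail estimate gives the bound.
   Let a_0 = 1, a_1, ..., a_n be determined from c by Newton's identities; the decay
   |c_m| <= (m+1)^-2 is inherited by the a_m, so sum_(m>=1) |a_m| < 1. The self-inversive
   polynomial R(x) = sum_(m<=n) (a_m x^m + conj(a_m) x^(N-m)) satisfies R(e^(it)) = e^(iNt/2) g(t)
   with g real and within 2 sum_(m>=1) |a_m| < 2 of 2 cos(Nt/2), so g changes sign between
   consecutive points 2 pi j/N and R has N distinct roots u on the circle. Hence
   R = prod_u (1 - x/u), and Newton's identities for this product, compared with those defining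
   the a_m, force the power sums of the points w = 1/u to be c_m. *)

section \<open>Sums of inverse squares\<close>

lemma sum_inverse_squares_le:
  "(\<Sum>j=1..n. 1 / (real j + 1)^2) \<le> 1 - 1 / (real n + 1)"
proof (induction n)
  case 0
  then show ?case by simp
next
  case (Suc n)
  have "1 / (real n + 2)^2 \<le> 1 / ((real n + 1) * (real n + 2))"
    unfolding power2_eq_square by (rule divide_left_mono) auto
  also have "\<dots> = 1 / (real n + 1) - 1 / (real n + 2)"
    by (simp add: field_simps)
  finally show ?case
    using Suc by (simp add: add.commute)
qed

lemma inverse_square_product_le:
  fixes a b :: real
  assumes "a > 0" "b > 0"
  shows "1 / (a^2 * b^2) \<le> 2 / (a + b)^2 * (1 / a^2 + 1 / b^2)"
proof -
  have "1/a + 1/b = (a + b) / (a * b)"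
    using assms by (simp add: field_simps)
  then have "1 / (a^2 * b^2) = (1/a + 1/b)^2 / (a + b)^2"
    using assms by (simp add: power_divide power_mult_distrib)
  also have "\<dots> \<le> 2 * (1/a^2 + 1/b^2) / (a + b)^2"
  proof (rule divide_right_mono)
    show "(1/a + 1/b)^2 \<le> 2 * (1/a^2 + 1/b^2)"
      using sum_squares_ge_zero[of "1/a - 1/b" 0] by (simp add: power2_eq_square algebra_simps)
  qed simp
  finally show ?thesis
    by simp
qed

lemma sum_inverse_square_products_le:
  assumes "m \<ge> 1"
  shows "(\<Sum>i=1..m-1. 1 / ((real i + 1)^2 * (real (m - i) + 1)^2))
           \<le> 4 * (1 - 1 / real m) / (real m + 2)^2"
proof -
  define M where "M = real m + 2"
  have "(\<Sum>i=1..m-1. 1 / (real (m - i) + 1)^2) = (\<Sum>i=1..m-1. 1 / (real i + 1)^2)"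
    using sum.atLeastAtMost_rev[of "\<lambda>i. 1 / (real i + 1)^2" 1 "m - 1"] assms by simp
  moreover have "1 / ((real i + 1)^2 * (real (m - i) + 1)^2)
      \<le> 2 / M^2 * (1 / (real i + 1)^2 + 1 / (real (m - i) + 1)^2)" if "i \<in> {1..m-1}" for i
  proof -
    have "i < m"
      using that by auto
    then have "(real i + 1) + (real (m - i) + 1) = M"
      by (simp add: M_def)
    then show ?thesis
      using inverse_square_product_le[of "real i + 1" "real (m - i) + 1"] by simp
  qed
  then have "(\<Sum>i=1..m-1. 1 / ((real i + 1)^2 * (real (m - i) + 1)^2))
      \<le> 2 / M^2 * ((\<Sum>i=1..m-1. 1 / (real i + 1)^2) + (\<Sum>i=1..m-1. 1 / (real (m - i) + 1)^2))"
    unfolding sum.distrib[symmetric] sum_distrib_left by (rule sum_mono)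
  moreover have "(\<Sum>i=1..m-1. 1 / (real i + 1)^2) \<le> 1 - 1 / real m"
    using sum_inverse_squares_le[of "m - 1"] assms by simp
  ultimately show ?thesis
    unfolding M_def by (simp add: field_simps)
qed

lemma inverse_square_convolution_le:
  assumes "m \<ge> 1"
  shows "1 / (real m + 1)^2 + (\<Sum>i=1..m-1. 1 / ((real i + 1)^2 * (real (m - i) + 1)^2))
           \<le> real m / (real m + 1)^2"
proof -
  consider "m = 1" | "m = 2" | "m \<ge> 3"
    using assms by linarith
  then show ?thesis
  proof cases
    case 3
    define x where "x = real m"
    have x3: "x \<ge> 3"
      using 3 by (simp add: x_def)
    have "x * (3 * 3) \<le> x * (x * x)"
      using x3 by (intro mult_left_mono mult_mono) auto
    moreover have "x * (x + 2)^2 - 4 * (x + 1)^2 = x * (x * x) - 4 * x - 4"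
      by (simp add: power2_eq_square algebra_simps)
    ultimately have "4 * (x + 1)^2 \<le> x * (x + 2)^2"
      using x3 by linarith
    then have "4 / (x * (x + 2)^2) \<le> 1 / (x + 1)^2"
      using x3 by (simp add: field_simps)
    then have "(x - 1) * (4 / (x * (x + 2)^2)) \<le> (x - 1) * (1 / (x + 1)^2)"
      using x3 by (intro mult_left_mono) auto
    moreover have "4 * (1 - 1 / x) / (x + 2)^2 = (x - 1) * (4 / (x * (x + 2)^2))"
      using x3 by (simp add: field_simps)
    moreover have "x / (x + 1)^2 = 1 / (x + 1)^2 + (x - 1) / (x + 1)^2"
      by (simp add: add_divide_distrib[symmetric])
    ultimately show ?thesis
      using sum_inverse_square_products_le[OF assms] unfolding x_def by simp
  qed (simp_all add: numeral_eq_Suc)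
qed

lemma norm_inverse_square_convolution_le:
  fixes a s :: "nat \<Rightarrow> 'a::real_normed_algebra_1"
  assumes "m \<ge> 1" "a 0 = 1"
    and a: "\<And>i. i \<in> {1..m-1} \<Longrightarrow> norm (a i) \<le> 1 / (real i + 1)^2"
    and s: "\<And>i. i \<in> {1..m} \<Longrightarrow> norm (s i) \<le> 1 / (real i + 1)^2"
  shows "norm (\<Sum>i<m. a i * s (m - i)) \<le> real m / (real m + 1)^2"
proof -
  have "{..<m} = insert 0 {1..m-1}"
    using assms(1) by auto
  then have "norm (\<Sum>i<m. a i * s (m - i)) = norm (s m + (\<Sum>i=1..m-1. a i * s (m - i)))"
    using assms(2) by simp
  also have "\<dots> \<le> norm (s m) + (\<Sum>i=1..m-1. norm (a i) * norm (s (m - i)))"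
    by (intro norm_triangle_mono norm_sum order_refl order.trans[OF norm_sum] sum_mono norm_mult_ineq)
  also have "\<dots> \<le> 1 / (real m + 1)^2 + (\<Sum>i=1..m-1. 1 / ((real i + 1)^2 * (real (m - i) + 1)^2))"
  proof (intro add_mono sum_mono)
    fix i
    assume i: "i \<in> {1..m-1}"
    then have "norm (a i) * norm (s (m - i)) \<le> 1 / (real i + 1)^2 * (1 / (real (m - i) + 1)^2)"
      using a[OF i] s[of "m - i"] by (intro mult_mono) auto
    then show "norm (a i) * norm (s (m - i)) \<le> 1 / ((real i + 1)^2 * (real (m - i) + 1)^2)"
      by simp
  qed (use s assms(1) in auto)
  also have "\<dots> \<le> real m / (real m + 1)^2"
    using assms(1) by (rule inverse_square_convolution_le)
  finally show ?thesis .
qed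

section \<open>Newton's identities\<close>

definition newton_identities :: "(nat \<Rightarrow> 'a::comm_ring_1) \<Rightarrow> (nat \<Rightarrow> 'a) \<Rightarrow> nat \<Rightarrow> bool" where
  "newton_identities a s n \<longleftrightarrow>
     a 0 = 1 \<and> (\<forall>m\<in>{1..n}. of_nat m * a m = - (\<Sum>i<m. a i * s (m - i)))"

lemma newton_identities_cong:
  assumes "\<And>i. i \<le> n \<Longrightarrow> a i = b i"
  shows "newton_identities a s n \<longleftrightarrow> newton_identities b s n"
proof -
  have "(\<Sum>i<m. a i * s (m - i)) = (\<Sum>i<m. b i * s (m - i))" if "m \<le> n" for m
    using that assms by (intro sum.cong) auto
  then show ?thesis
    unfolding newton_identities_def using assms by (intro conj_cong ball_cong refl) auto
qed

lemma newton_identities_power_sums_unique: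
  assumes "newton_identities a s n" "newton_identities a s' n" "m \<in> {1..n}"
  shows "s m = s' m"
  using assms(3)
proof (induction m rule: less_induct)
  case (less m)
  have split: "(\<Sum>i<m. a i * t (m - i)) = t m + (\<Sum>i=1..m-1. a i * t (m - i))" for t
  proof -
    have "{..<m} = insert 0 {1..m-1}"
      using less.prems by auto
    then show ?thesis
      using assms(1) by (simp add: newton_identities_def)
  qed
  have "of_nat m * a m = - (\<Sum>i<m. a i * s (m - i))"
    "of_nat m * a m = - (\<Sum>i<m. a i * s' (m - i))"
    using assms(1,2) less.prems unfolding newton_identities_def by blast+
  then have "(\<Sum>i<m. a i * s (m - i)) = (\<Sum>i<m. a i * s' (m - i))"
    by simp
  moreover have "(\<Sum>i=1..m-1. a i * s (m - i)) = (\<Sum>i=1..m-1. a i * s' (m - i))"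
    using less by (intro sum.cong refl) auto
  ultimately show ?case
    unfolding split by simp
qed

function newton_coeffs :: "(nat \<Rightarrow> 'a::field_char_0) \<Rightarrow> nat \<Rightarrow> 'a" where
  "newton_coeffs s m =
     (if m = 0 then 1 else - (\<Sum>i<m. newton_coeffs s i * s (m - i)) / of_nat m)"
  by auto
termination
  by (relation "Wellfounded.measure snd") auto

declare newton_coeffs.simps [simp del]

lemma newton_identities_newton_coeffs: "newton_identities (newton_coeffs s) s n"
  unfolding newton_identities_def by (subst (1 2) newton_coeffs.simps) auto

lemma norm_newton_coeffs_le:
  fixes s :: "nat \<Rightarrow> 'a::real_normed_field"
  assumes s: "\<And>m. m \<in> {1..n} \<Longrightarrow> norm (s m) \<le> 1 / (real m + 1)^2" and "m \<in> {1..n}"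
  shows "norm (newton_coeffs s m) \<le> 1 / (real m + 1)^2"
  using assms(2)
proof (induction m rule: less_induct)
  case (less m)
  have "norm (\<Sum>i<m. newton_coeffs s i * s (m - i)) \<le> real m / (real m + 1)^2"
  proof (rule norm_inverse_square_convolution_le)
    show "newton_coeffs s 0 = 1"
      by (simp add: newton_coeffs.simps)
    show "norm (newton_coeffs s i) \<le> 1 / (real i + 1)^2" if "i \<in> {1..m-1}" for i
      using that less by auto
  qed (use less.prems s in auto)
  moreover have "newton_coeffs s m = - (\<Sum>i<m. newton_coeffs s i * s (m - i)) / of_nat m"
    using less.prems by (simp add: newton_coeffs.simps[of s m])
  ultimately show ?case
    using less.prems by (simp add: norm_divide divide_le_eq)
qed

definition fps_geometric_tail :: "'a::comm_ring_1 \<Rightarrow> 'a fps" where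
  "fps_geometric_tail w = Abs_fps (\<lambda>m. if m = 0 then 0 else w ^ m)"

lemma fps_geometric_tail_mult:
  "(1 - fps_const w * fps_X) * fps_geometric_tail w = fps_const w * fps_X"
proof (rule fps_ext)
  fix m
  have "(1 - fps_const w * fps_X) * fps_geometric_tail w
      = fps_geometric_tail w - fps_const w * (fps_X * fps_geometric_tail w)"
    by (simp add: algebra_simps)
  then show "fps_nth ((1 - fps_const w * fps_X) * fps_geometric_tail w) m
      = fps_nth (fps_const w * fps_X) m"
    by (cases m) (auto simp: fps_geometric_tail_def)
qed

lemma fps_X_mult_deriv_prod_linear:
  fixes W :: "'a::comm_ring_1 set"
  assumes "finite W"
  shows "fps_X * fps_deriv (\<Prod>w\<in>W. 1 - fps_const w * fps_X)
       = - (\<Prod>w\<in>W. 1 - fps_const w * fps_X) * (\<Sum>w\<in>W. fps_geometric_tail w)"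
  using assms
proof (induction W rule: finite_induct)
  case (insert w W)
  define P where "P = (\<Prod>w\<in>W. 1 - fps_const w * fps_X)"
  define G where "G = (\<Sum>w\<in>W. fps_geometric_tail w)"
  define F where "F = 1 - fps_const w * fps_X"
  have IH: "fps_X * fps_deriv P = - P * G"
    using insert.IH unfolding P_def G_def .
  have dF: "fps_deriv F = - fps_const w"
    unfolding F_def by simp
  have "fps_X * fps_deriv (F * P) = fps_X * (fps_deriv F * P) + F * (fps_X * fps_deriv P)"
    by (simp add: algebra_simps)
  also have "\<dots> = - (fps_const w * fps_X) * P - F * P * G"
    unfolding dF IH by (simp add: algebra_simps fps_const_neg[symmetric] del: fps_const_neg)
  also have "\<dots> = - (F * P) * (G + fps_geometric_tail w)"
    unfolding fps_geometric_tail_mult[of w, folded F_def, symmetric] by (simp add: algebra_simps)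
  finally show ?case
    using insert.hyps unfolding P_def G_def F_def by (simp add: add.commute)
qed simp

lemma newton_identities_prod_linear:
  fixes W :: "'a::comm_ring_1 set"
  assumes "finite W"
  shows "newton_identities (coeff (\<Prod>w\<in>W. [:1, - w:])) (\<lambda>m. \<Sum>w\<in>W. w ^ m) n"
proof -
  define A where "A = (\<Prod>w\<in>W. 1 - fps_const w * fps_X)"
  have A: "A = fps_of_poly (\<Prod>w\<in>W. [:1, - w:])"
    unfolding A_def fps_of_poly_prod
    by (intro prod.cong refl) (simp add: fps_of_poly_pCons fps_of_poly_const)
  have deriv: "fps_X * fps_deriv A = - A * (\<Sum>w\<in>W. fps_geometric_tail w)"
    unfolding A_def by (rule fps_X_mult_deriv_prod_linear[OF assms])
  have "of_nat m * fps_nth A m = - (\<Sum>i<m. fps_nth A i * (\<Sum>w\<in>W. w ^ (m - i)))"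
    if "m \<ge> 1" for m
  proof -
    have "of_nat m * fps_nth A m = fps_nth (fps_X * fps_deriv A) m"
      using that by (cases m) simp_all
    also have "\<dots> = fps_nth (- A * (\<Sum>w\<in>W. fps_geometric_tail w)) m"
      unfolding deriv ..
    also have "\<dots> = - (\<Sum>i\<le>m. fps_nth A i * (\<Sum>w\<in>W. fps_nth (fps_geometric_tail w) (m - i)))"
      by (simp add: fps_mult_nth fps_sum_nth sum_negf atLeast0AtMost)
    also have "\<dots> = - (\<Sum>i<m. fps_nth A i * (\<Sum>w\<in>W. w ^ (m - i)))"
      by (simp add: lessThan_Suc_atMost[symmetric] fps_geometric_tail_def)
    finally show ?thesis .
  qed
  moreover have "coeff (\<Prod>w\<in>W. [:1, - w:]) 0 = 1"
    by (simp add: poly_0_coeff_0[symmetric] poly_prod)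
  ultimately show ?thesis
    unfolding newton_identities_def A by simp
qed

section \<open>Self-inversive polynomials with all roots on the unit circle\<close>

definition self_inversive_poly :: "(nat \<Rightarrow> complex) \<Rightarrow> nat \<Rightarrow> complex poly" where
  "self_inversive_poly a n = (\<Sum>m\<le>n. monom (a m) m + monom (cnj (a m)) (2*n+1 - m))"

definition self_inversive_trig :: "(nat \<Rightarrow> complex) \<Rightarrow> nat \<Rightarrow> real \<Rightarrow> real" where
  "self_inversive_trig a n \<theta> = (\<Sum>m\<le>n. 2 * Re (a m * cis ((real m - real (2*n+1) / 2) * \<theta>)))"

lemma coeff_self_inversive_poly:
  assumes "i \<le> n"
  shows "coeff (self_inversive_poly a n) i = a i"
proof -
  have "(\<Sum>m\<le>n. coeff (monom (cnj (a m)) (2*n+1 - m)) i) = 0"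
    using assms by (intro sum.neutral) auto
  then show ?thesis
    using assms by (simp add: self_inversive_poly_def coeff_sum sum.distrib)
qed

lemma degree_self_inversive_poly: "degree (self_inversive_poly a n) \<le> 2*n+1"
  unfolding self_inversive_poly_def
  by (intro degree_sum_le degree_add_le order.trans[OF degree_monom_le]) auto

lemma poly_self_inversive_poly_cis:
  "poly (self_inversive_poly a n) (cis \<theta>)
     = cis (real (2*n+1) * \<theta> / 2) * complex_of_real (self_inversive_trig a n \<theta>)"
proof -
  define N where "N = 2*n+1"
  have "cis (real N * \<theta> / 2) * complex_of_real (2 * Re (a m * cis ((real m - real N / 2) * \<theta>)))
      = a m * cis \<theta> ^ m + cnj (a m) * cis \<theta> ^ (N - m)" if "m \<le> n" for m
  proof -
    have "complex_of_real (2 * Re (a m * cis ((real m - real N / 2) * \<theta>)))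
        = a m * cis ((real m - real N / 2) * \<theta>) + cnj (a m) * cis (- ((real m - real N / 2) * \<theta>))"
      unfolding complex_add_cnj[symmetric] complex_cnj_mult cis_cnj ..
    moreover have "real (N - m) = real N - real m"
      using that by (simp add: N_def)
    ultimately show ?thesis
      by (simp add: Complex.DeMoivre cis_mult algebra_simps)
  qed
  then show ?thesis
    unfolding self_inversive_poly_def self_inversive_trig_def N_def[symmetric]
    by (simp add: poly_sum poly_monom sum_distrib_left)
qed

lemma continuous_on_self_inversive_trig: "continuous_on S (self_inversive_trig a n)"
  unfolding self_inversive_trig_def by (intro continuous_intros)

lemma self_inversive_trig_deviation:
  assumes "a 0 = 1"
  shows "\<bar>self_inversive_trig a n \<theta> - 2 * cos (real (2*n+1) * \<theta> / 2)\<bar> \<le> 2 * (\<Sum>m=1..n. norm (a m))"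
proof -
  have "{..n} = insert 0 {1..n}"
    by auto
  then have "self_inversive_trig a n \<theta> - 2 * cos (real (2*n+1) * \<theta> / 2)
      = (\<Sum>m=1..n. 2 * Re (a m * cis ((real m - real (2*n+1) / 2) * \<theta>)))"
    using assms by (simp add: self_inversive_trig_def)
  also have "\<bar>\<dots>\<bar> \<le> (\<Sum>m=1..n. 2 * norm (a m))"
  proof (rule order.trans[OF sum_abs sum_mono])
    fix m
    have "\<bar>2 * Re z\<bar> \<le> 2 * norm z" for z :: complex
      using abs_Re_le_cmod[of z] by (simp add: abs_mult)
    then show "\<bar>2 * Re (a m * cis ((real m - real (2*n+1) / 2) * \<theta>))\<bar> \<le> 2 * norm (a m)"
      by (metis mult.right_neutral norm_cis norm_mult)
  qed
  finally show ?thesis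
    by (simp add: sum_distrib_left)
qed

lemma self_inversive_trig_grid_sign:
  assumes "a 0 = 1" and "(\<Sum>m=1..n. norm (a m)) < 1"
  shows "(-1)^j * self_inversive_trig a n (2 * pi * real j / real (2*n+1)) > 0"
proof -
  define g where "g = self_inversive_trig a n (2 * pi * real j / real (2*n+1))"
  have "real (2*n+1) * (2 * pi * real j / real (2*n+1)) / 2 = real j * pi"
    by (simp add: field_simps)
  then have "\<bar>g - 2 * (-1)^j\<bar> < 2"
    using self_inversive_trig_deviation[of a n "2 * pi * real j / real (2*n+1)", OF assms(1)] assms(2)
    unfolding g_def by simp
  then show ?thesis
    unfolding g_def[symmetric] by (cases "even j") (auto simp: abs_if split: if_splits)
qed

lemma IVT_sign_change:
  fixes f :: "real \<Rightarrow> real"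
  assumes "continuous_on {a..b} f" "a \<le> b" "f a * f b < 0"
  shows "\<exists>x. a < x \<and> x < b \<and> f x = 0"
proof -
  have "\<exists>x. a \<le> x \<and> x \<le> b \<and> f x = 0"
  proof (cases "f a < 0")
    case True
    then show ?thesis
      using assms IVT'[of f a 0 b] by (auto simp: mult_less_0_iff)
  next
    case False
    then show ?thesis
      using assms IVT2'[of f b 0 a] by (auto simp: mult_less_0_iff)
  qed
  then obtain x where "a \<le> x" "x \<le> b" "f x = 0"
    by blast
  moreover have "x \<noteq> a" "x \<noteq> b"
    using assms(3) \<open>f x = 0\<close> by auto
  ultimately show ?thesis
    by (intro exI[of _ x]) auto
qed

lemma self_inversive_trig_zeros:
  assumes "a 0 = 1" and "(\<Sum>m=1..n. norm (a m)) < 1"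
  obtains \<phi> where
    "\<And>j. 2 * pi * real j / real (2*n+1) < \<phi> j"
    "\<And>j. \<phi> j < 2 * pi * real (Suc j) / real (2*n+1)"
    "\<And>j. self_inversive_trig a n (\<phi> j) = 0"
proof -
  define t where "t j = 2 * pi * real j / real (2*n+1)" for j
  have "\<exists>x. t j < x \<and> x < t (Suc j) \<and> self_inversive_trig a n x = 0" for j
  proof (rule IVT_sign_change)
    show "t j \<le> t (Suc j)"
      unfolding t_def by (simp add: divide_right_mono)
    have "0 < ((-1)^j * self_inversive_trig a n (t j)) * ((-1)^Suc j * self_inversive_trig a n (t (Suc j)))"
      using self_inversive_trig_grid_sign[OF assms, of j] self_inversive_trig_grid_sign[OF assms, of "Suc j"]
      unfolding t_def by (rule mult_pos_pos)
    then show "self_inversive_trig a n (t j) * self_inversive_trig a n (t (Suc j)) < 0"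
      by (cases "even j") auto
  qed (rule continuous_on_self_inversive_trig)
  then show ?thesis
    using that unfolding t_def by metis
qed

lemma inj_on_cis: "inj_on cis {a<..a + 2 * pi}"
proof (rule inj_onI)
  fix x y
  assume "x \<in> {a<..a + 2 * pi}" "y \<in> {a<..a + 2 * pi}" "cis x = cis y"
  then have "x - (a + pi) \<in> {-pi<..pi}" "y - (a + pi) \<in> {-pi<..pi}"
    "cis (x - (a + pi)) = cis (y - (a + pi))"
    by (auto simp: cis_divide[symmetric])
  then have "x - (a + pi) = y - (a + pi)"
    by (metis Arg_cis)
  then show "x = y"
    by simp
qed

lemma self_inversive_trig_distinct_zeros:
  assumes "a 0 = 1" and "(\<Sum>m=1..n. norm (a m)) < 1"
  obtains \<phi> where "inj_on \<phi> {..<2*n+1}" "\<phi> ` {..<2*n+1} \<subseteq> {0<..0 + 2 * pi}"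
    "\<And>j. self_inversive_trig a n (\<phi> j) = 0"
proof -
  define N where "N = 2*n+1"
  define t where "t j = 2 * pi * real j / real N" for j
  obtain \<phi> where \<phi>_gt: "\<And>j. t j < \<phi> j" and \<phi>_lt: "\<And>j. \<phi> j < t (Suc j)"
    and zero: "\<And>j. self_inversive_trig a n (\<phi> j) = 0"
    using self_inversive_trig_zeros[OF assms] unfolding N_def t_def by blast
  have t_mono: "t j \<le> t k" if "j \<le> k" for j k
    unfolding t_def using that by (intro divide_right_mono mult_left_mono) auto
  have "strict_mono_on {..<N} \<phi>"
  proof (rule strict_mono_onI)
    fix j k :: nat
    assume "j < k"
    then show "\<phi> j < \<phi> k"
      using \<phi>_lt[of j] t_mono[of "Suc j" k] \<phi>_gt[of k] by linarith
  qed
  then have "inj_on \<phi> {..<N}"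
    by (rule strict_mono_on_imp_inj_on)
  moreover have "\<phi> ` {..<N} \<subseteq> {0<..0 + 2 * pi}"
  proof safe
    fix j
    assume "j < N"
    have "t 0 = 0" "t N = 2 * pi"
      unfolding t_def N_def by simp_all
    then have "0 < \<phi> j" "\<phi> j \<le> 2 * pi"
      using \<phi>_gt[of j] \<phi>_lt[of j] t_mono[of 0 j] t_mono[of "Suc j" N] \<open>j < N\<close> by auto
    then show "\<phi> j \<in> {0<..0 + 2 * pi}"
      by simp
  qed
  ultimately show ?thesis
    using that zero unfolding N_def by blast
qed

lemma self_inversive_poly_unit_roots:
  assumes "a 0 = 1" and "(\<Sum>m=1..n. norm (a m)) < 1"
  obtains U where "card U = 2*n+1" "\<forall>u\<in>U. norm u = 1"
    "\<forall>u\<in>U. poly (self_inversive_poly a n) u = 0"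
proof -
  obtain \<phi> where inj: "inj_on \<phi> {..<2*n+1}" and range: "\<phi> ` {..<2*n+1} \<subseteq> {0<..0 + 2 * pi}"
    and zero: "\<And>j. self_inversive_trig a n (\<phi> j) = 0"
    using self_inversive_trig_distinct_zeros[OF assms] by blast
  have "inj_on (cis \<circ> \<phi>) {..<2*n+1}"
    using inj inj_on_subset[OF inj_on_cis range] by (rule comp_inj_on)
  then have "card ((cis \<circ> \<phi>) ` {..<2*n+1}) = 2*n+1"
    using card_image by fastforce
  moreover have "poly (self_inversive_poly a n) (cis (\<phi> j)) = 0" for j
    by (simp add: poly_self_inversive_poly_cis zero)
  ultimately show ?thesis
    using that[of "(cis \<circ> \<phi>) ` {..<2*n+1}"] by auto
qed

lemma poly_eq_prod_inverse_roots:
  fixes P :: "'a::field poly"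
  assumes "finite U" "0 \<notin> U" "degree P \<le> card U"
    and "poly P 0 = 1" "\<And>u. u \<in> U \<Longrightarrow> poly P u = 0"
  shows "P = (\<Prod>u\<in>U. [:1, - inverse u:])"
proof (rule poly_eqI_degree[where A = "insert 0 U"])
  fix x
  assume "x \<in> insert 0 U"
  then show "poly P x = poly (\<Prod>u\<in>U. [:1, - inverse u:]) x"
  proof
    assume "x = 0"
    then show ?thesis
      using assms(4) by (simp add: poly_prod)
  next
    assume "x \<in> U"
    then have "x \<noteq> 0"
      using assms(2) by auto
    then have "poly [:1, - inverse x:] x = 0"
      by simp
    then have "poly (\<Prod>u\<in>U. [:1, - inverse u:]) x = 0"
      unfolding poly_prod using \<open>x \<in> U\<close> assms(1) by (intro prod_zero) auto
    then show ?thesis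
      using assms(5) \<open>x \<in> U\<close> by simp
  qed
next
  have "degree (\<Prod>u\<in>U. [:1, - inverse u:]) \<le> (\<Sum>u\<in>U. degree [:1, - inverse u:])"
    using degree_prod_sum_le[OF assms(1), of "\<lambda>u. [:1, - inverse u:]"] by (simp add: o_def)
  also have "\<dots> \<le> card U"
    using sum_mono[of U "\<lambda>u. degree [:1, - inverse u:]" "\<lambda>_. 1"] by simp
  finally have "degree (\<Prod>u\<in>U. [:1, - inverse u:]) \<le> card U" .
  moreover have "card (insert 0 U) = card U + 1"
    using assms(1,2) by simp
  ultimately show "degree P < card (insert 0 U)" "degree (\<Prod>u\<in>U. [:1, - inverse u:]) < card (insert 0 U)"
    using assms(3) by linarith+
qed

lemma self_inversive_poly_unit_circle_factorization:
  assumes "a 0 = 1" and "(\<Sum>m=1..n. norm (a m)) < 1"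
  obtains W where "card W = 2*n+1" "\<forall>w\<in>W. norm w = 1"
    "self_inversive_poly a n = (\<Prod>w\<in>W. [:1, - w:])"
proof -
  obtain U where card_U: "card U = 2*n+1" and unit: "\<forall>u\<in>U. norm u = 1"
    and roots: "\<forall>u\<in>U. poly (self_inversive_poly a n) u = 0"
    using self_inversive_poly_unit_roots[OF assms] by blast
  have "finite U"
    using card_U by (simp add: card_ge_0_finite)
  have "self_inversive_poly a n = (\<Prod>u\<in>U. [:1, - inverse u:])"
  proof (rule poly_eq_prod_inverse_roots)
    show "0 \<notin> U"
      using unit by auto
    show "degree (self_inversive_poly a n) \<le> card U"
      using degree_self_inversive_poly[of a n] card_U by simp
    show "poly (self_inversive_poly a n) 0 = 1"
      using coeff_self_inversive_poly[of 0 n a] assms(1) by (simp add: poly_0_coeff_0)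
  qed (use \<open>finite U\<close> roots in auto)
  also have "\<dots> = (\<Prod>w\<in>inverse ` U. [:1, - w:])"
    by (simp add: prod.reindex inj_on_def)
  finally show ?thesis
    using that[of "inverse ` U"] card_U unit by (simp add: card_image inj_on_def norm_inverse)
qed

lemma unit_circle_points_with_power_sums:
  fixes c :: "nat \<Rightarrow> complex"
  assumes c: "\<And>m. m \<in> {1..n} \<Longrightarrow> norm (c m) \<le> 1 / (real m + 1)^2"
  obtains W where "card W = 2*n+1" "\<forall>w\<in>W. norm w = 1"
    "\<And>m. m \<in> {1..n} \<Longrightarrow> (\<Sum>w\<in>W. w ^ m) = c m"
proof -
  define a where "a = newton_coeffs c"
  have newton_c: "newton_identities a c n"
    unfolding a_def by (rule newton_identities_newton_coeffs)
  have "(\<Sum>m=1..n. norm (a m)) \<le> (\<Sum>m=1..n. 1 / (real m + 1)^2)"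
    unfolding a_def by (intro sum_mono norm_newton_coeffs_le[OF c])
  also have "\<dots> \<le> 1 - 1 / (real n + 1)"
    by (rule sum_inverse_squares_le)
  also have "\<dots> < 1"
    by simp
  finally obtain W where card_W: "card W = 2*n+1" and unit: "\<forall>w\<in>W. norm w = 1"
    and W: "self_inversive_poly a n = (\<Prod>w\<in>W. [:1, - w:])"
    using self_inversive_poly_unit_circle_factorization newton_c
    unfolding newton_identities_def by blast
  have "newton_identities (coeff (self_inversive_poly a n)) (\<lambda>m. \<Sum>w\<in>W. w ^ m) n"
    unfolding W using card_W by (intro newton_identities_prod_linear) (simp add: card_ge_0_finite)
  then have "newton_identities a (\<lambda>m. \<Sum>w\<in>W. w ^ m) n"
    by (subst (asm) newton_identities_cong[of n _ a]) (simp_all add: coeff_self_inversive_poly)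
  then show ?thesis
    using that card_W unit newton_identities_power_sums_unique[OF _ newton_c] by blast
qed

section \<open>Exponential tail estimates\<close>

lemma sums_exp: "(\<lambda>j. x^j / fact j) sums exp (x::'a::{real_normed_field,banach})"
  using exp_converges[of x] by (simp add: scaleR_conv_of_real divide_inverse mult.commute)

lemma power_divide_fact_Suc_add_le:
  fixes x :: real
  assumes "x \<ge> 0"
  shows "x^(Suc i + n) / fact (Suc i + n) \<le> x^n / fact n * (x / (real n + 1) * (x^i / fact i))"
proof -
  have "Suc n + i = Suc i + n"
    by simp
  then have "fact (Suc n) * fact i dvd (fact (Suc i + n) :: nat)"
    using fact_fact_dvd_fact[of "Suc n" i] by (simp only:)
  then have "fact (Suc n) * fact i \<le> (fact (Suc i + n) :: nat)"
    by (rule dvd_imp_le) simp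
  then have "real (fact (Suc n) * fact i) \<le> real (fact (Suc i + n))"
    by (simp only: of_nat_le_iff)
  then have "(fact (Suc n) :: real) * fact i \<le> fact (Suc i + n)"
    by (simp only: of_nat_mult of_nat_fact)
  then have "x^(Suc i + n) / fact (Suc i + n) \<le> x^(Suc i + n) / (fact (Suc n) * fact i)"
    using assms by (intro divide_left_mono) auto
  also have "\<dots> = (x^n * (x * x^i)) / (fact n * ((real n + 1) * fact i))"
    by (simp add: power_add mult_ac)
  also have "\<dots> = x^n / fact n * (x / (real n + 1) * (x^i / fact i))"
    by (simp only: times_divide_times_eq)
  finally show ?thesis .
qed

lemma exp_tail_le:
  fixes x :: real
  assumes "x \<ge> 0"
  shows "summable (\<lambda>i. x^(i+n) / fact (i+n))"
    and "(\<Sum>i. x^(i+n) / fact (i+n)) \<le> x^n / fact n * (1 + x * exp x / (real n + 1))"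
proof -
  define f where "f i = x^(i+n) / fact (i+n)" for i
  define K where "K = x^n / fact n * (x / (real n + 1))"
  show summable: "summable f"
    unfolding f_def using sums_summable[OF sums_exp] by (rule summable_ignore_initial_segment)
  have "f (Suc i) \<le> K * (x^i / fact i)" for i
    using power_divide_fact_Suc_add_le[OF assms] by (simp only: f_def K_def mult.assoc)
  then have "(\<Sum>i. f (Suc i)) \<le> (\<Sum>i. K * (x^i / fact i))"
    by (rule suminf_le[OF _ summable_ignore_initial_segment[OF summable, of 1]
          sums_summable[OF sums_mult[OF sums_exp]], unfolded Suc_eq_plus1[symmetric]])
  also have "\<dots> = K * exp x"
    by (rule sums_unique[OF sums_mult[OF sums_exp], symmetric])
  finally have "suminf f \<le> f 0 + K * exp x"
    using suminf_split_head[OF summable] by simp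
  also have "f 0 + K * exp x = x^n / fact n * (1 + x * exp x / (real n + 1))"
    unfolding f_def K_def by (simp add: distrib_left)
  finally show "suminf f \<le> x^n / fact n * (1 + x * exp x / (real n + 1))" .
qed

lemma norm_sums_le_exp_tail:
  fixes t :: "nat \<Rightarrow> 'a::banach"
  assumes "t sums S" and "\<And>j. j < n \<Longrightarrow> t j = 0"
    and "\<And>j. norm (t j) \<le> C * (x^j / fact j)" and "x \<ge> 0"
  shows "norm S \<le> C * (x^n / fact n * (1 + x * exp x / (real n + 1)))"
proof -
  have "C \<ge> 0"
    using order.trans[OF norm_ge_zero assms(3)[of 0]] by simp
  have "(\<lambda>i. t (i+n)) sums S"
    using assms(1,2) by (simp add: sums_zero_iff_shift)
  then have "norm S = norm (\<Sum>i. t (i+n))"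
    by (simp add: sums_iff)
  also have "\<dots> \<le> (\<Sum>i. C * (x^(i+n) / fact (i+n)))"
    by (rule norm_suminf_le[OF assms(3) summable_mult[OF exp_tail_le(1)[OF assms(4)]]])
  also have "\<dots> = C * (\<Sum>i. x^(i+n) / fact (i+n))"
    using exp_tail_le(1)[OF assms(4)] by (rule suminf_mult)
  also have "\<dots> \<le> C * (x^n / fact n * (1 + x * exp x / (real n + 1)))"
    by (rule mult_left_mono[OF exp_tail_le(2)[OF assms(4)] \<open>C \<ge> 0\<close>])
  finally show ?thesis .
qed

lemma norm_power_sum_le_card:
  fixes W :: "'a::real_normed_algebra_1 set"
  assumes "\<And>w. w \<in> W \<Longrightarrow> norm w \<le> 1"
  shows "norm (\<Sum>w\<in>W. w ^ k) \<le> real (card W)"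
proof -
  have "norm (\<Sum>w\<in>W. w ^ k) \<le> (\<Sum>w\<in>W. norm (w ^ k))"
    by (rule norm_sum)
  also have "\<dots> \<le> (\<Sum>w\<in>W. 1)"
  proof (rule sum_mono)
    fix w
    assume "w \<in> W"
    then show "norm (w ^ k) \<le> 1"
      by (rule order.trans[OF norm_power_ineq power_le_one[OF norm_ge_zero assms]])
  qed
  finally show ?thesis
    by simp
qed

lemma sums_power_sum_exp:
  fixes W :: "complex set"
  shows "(\<lambda>j. (\<Sum>w\<in>W. w ^ Suc j) * z^j / fact j) sums (\<Sum>w\<in>W. w * exp (w * z))"
proof -
  have "(\<lambda>j. \<Sum>w\<in>W. w * ((w * z)^j / fact j)) sums (\<Sum>w\<in>W. w * exp (w * z))"
    by (intro sums_sum sums_mult sums_exp)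
  moreover have "(\<Sum>w\<in>W. w * ((w * z)^j / fact j)) = (\<Sum>w\<in>W. w ^ Suc j) * z^j / fact j" for j
    unfolding sum_distrib_right sum_divide_distrib
    by (intro sum.cong refl) (simp add: power_mult_distrib)
  ultimately show ?thesis
    by simp
qed

lemma norm_exp_sum_sub_series_le:
  fixes W :: "complex set" and p :: "nat \<Rightarrow> complex"
  assumes unit: "\<And>w. w \<in> W \<Longrightarrow> norm w \<le> 1"
    and p: "\<And>j. norm (p j) \<le> 1"
    and power_sums: "\<And>j. j < n \<Longrightarrow> (\<Sum>w\<in>W. w ^ Suc j) = p j"
  shows "norm ((\<Sum>w\<in>W. w * exp (w * z)) - (\<Sum>j. p j * z^j / of_nat (fact j)))
     \<le> (real (card W) + 1) * (norm z ^ n / fact n * (1 + norm z * exp (norm z) / (real n + 1)))"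
proof (rule norm_sums_le_exp_tail)
  define s where "s j = (\<Sum>w\<in>W. w ^ Suc j)" for j
  have "summable (\<lambda>j. p j * z^j / of_nat (fact j))"
  proof (rule summable_comparison_test'[OF sums_summable[OF sums_exp[of "norm z"]]])
    fix j
    have "norm (p j * z^j / of_nat (fact j)) = norm (p j) * (norm z ^ j / fact j)"
      by (simp add: norm_mult norm_divide norm_power)
    also have "\<dots> \<le> norm z ^ j / fact j"
      using p[of j] by (intro mult_left_le_one_le) auto
    finally show "norm (p j * z^j / of_nat (fact j)) \<le> norm z ^ j / fact j" .
  qed
  with sums_power_sum_exp
  show "(\<lambda>j. s j * z^j / fact j - p j * z^j / of_nat (fact j))
      sums ((\<Sum>w\<in>W. w * exp (w * z)) - (\<Sum>j. p j * z^j / of_nat (fact j)))"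
    unfolding s_def by (intro sums_diff summable_sums)
  show "s j * z^j / fact j - p j * z^j / of_nat (fact j) = 0" if "j < n" for j
    using power_sums[OF that] by (simp add: s_def)
  fix j
  have "norm (s j * z^j / fact j - p j * z^j / of_nat (fact j))
      \<le> norm (s j * z^j / fact j) + norm (p j * z^j / of_nat (fact j))"
    by (rule norm_triangle_ineq4)
  also have "\<dots> = norm (s j) * (norm z ^ j / fact j) + norm (p j) * (norm z ^ j / fact j)"
    by (simp add: norm_mult norm_divide norm_power)
  also have "\<dots> \<le> real (card W) * (norm z ^ j / fact j) + 1 * (norm z ^ j / fact j)"
  proof (intro add_mono mult_right_mono)
    show "norm (s j) \<le> real (card W)"
      unfolding s_def by (rule norm_power_sum_le_card) (rule unit)
  qed (use p in auto)
  finally show "norm (s j * z^j / fact j - p j * z^j / of_nat (fact j))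
      \<le> (real (card W) + 1) * (norm z ^ j / fact j)"
    by (simp only: distrib_right)
qed simp

lemma exp_sum_approximation:
  fixes p :: "nat \<Rightarrow> complex"
  assumes p_bound: "\<And>j. norm (p j) \<le> 1 / (real j + 2)^2"
  obtains lam :: "nat \<Rightarrow> complex" where "inj_on lam {1..2*n+1}" "\<forall>k\<in>{1..2*n+1}. norm (lam k) = 1"
    "\<And>z. norm ((\<Sum>k=1..2*n+1. lam k * exp (lam k * z)) - (\<Sum>j. p j * z^j / of_nat (fact j)))
      \<le> (real (2*n+1) + 1) * (norm z ^ n / fact n * (1 + norm z * exp (norm z) / (real n + 1)))"
proof -
  have p_le_1: "norm (p j) \<le> 1" for j
    using p_bound[of j] order.trans[of _ "1 / (real j + 2)^2" 1] by (simp add: divide_le_eq)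
  have "norm (p (m - 1)) \<le> 1 / (real m + 1)^2" if "m \<in> {1..n}" for m
    using p_bound[of "m - 1"] that by (simp add: add.commute)
  then obtain W where card_W: "card W = 2*n+1" and unit: "\<forall>w\<in>W. norm w = 1"
    and power_sums: "\<And>m. m \<in> {1..n} \<Longrightarrow> (\<Sum>w\<in>W. w ^ m) = p (m - 1)"
    using unit_circle_points_with_power_sums[of n "\<lambda>m. p (m - 1)"] by blast
  have power_sums_Suc: "(\<Sum>w\<in>W. w ^ Suc j) = p j" if "j < n" for j
    using power_sums[of "Suc j"] that by simp
  have "finite W"
    using card_W by (simp add: card_ge_0_finite)
  then obtain lam where lam: "bij_betw lam {1..2*n+1} W"
    using ex_bij_betw_nat_finite_1[OF \<open>finite W\<close>] unfolding card_W by blast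
  show ?thesis
  proof (rule that)
    show "inj_on lam {1..2*n+1}"
      using lam by (rule bij_betw_imp_inj_on)
    show "\<forall>k\<in>{1..2*n+1}. norm (lam k) = 1"
      using lam unit by (auto dest: bij_betwE)
    show "norm ((\<Sum>k=1..2*n+1. lam k * exp (lam k * z)) - (\<Sum>j. p j * z^j / of_nat (fact j)))
      \<le> (real (2*n+1) + 1) * (norm z ^ n / fact n * (1 + norm z * exp (norm z) / (real n + 1)))"
      for z
      using norm_exp_sum_sub_series_le[OF _ p_le_1 power_sums_Suc, where z = z] unit card_W
      unfolding sum.reindex_bij_betw[OF lam, of "\<lambda>w. w * exp (w * z)"] by simp
  qed
qed

lemma error_bound_weakening:
  fixes r x X :: real
  assumes "0 < r" "r < 1" "0 \<le> x" "0 \<le> X"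
  shows "(real (2*n+1) + 1) * (X * (1 + x * exp x / (real n + 1)))
    \<le> X * (15 / (1 - r^(n+1))) * (real n + 2 / (1 - r)) * (1 + x * exp (x / r) / (r * real n + r))"
proof -
  have r_pow: "0 < 1 - r^(n+1)" "1 - r^(n+1) \<le> 1"
    using assms(1,2) power_Suc_less_one[of r n] by auto
  have "real (2*n+1) + 1 \<le> 15 * (real n + 2)"
    by simp
  also have "\<dots> \<le> 15 / (1 - r^(n+1)) * (real n + 2 / (1 - r))"
    using assms(1,2) r_pow by (intro mult_mono) (simp_all add: le_divide_eq)
  finally have factor: "real (2*n+1) + 1 \<le> 15 / (1 - r^(n+1)) * (real n + 2 / (1 - r))" .
  have factor_nonneg: "0 \<le> 15 / (1 - r^(n+1)) * (real n + 2 / (1 - r))"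
    using factor by linarith
  have tail: "x * exp x / (real n + 1) \<le> x * exp (x / r) / (r * real n + r)"
  proof (rule frac_le)
    show "x * exp x \<le> x * exp (x / r)"
      using assms by (intro mult_left_mono) (auto simp: le_divide_eq mult_left_le)
    show "r * real n + r \<le> real n + 1"
      using assms(2) mult_right_mono[of r 1 "real n + 1"] by (simp add: algebra_simps)
    show "0 < r * real n + r"
      using assms(1) by (intro add_nonneg_pos) auto
  qed (use assms in auto)
  have "(real (2*n+1) + 1) * (X * (1 + x * exp x / (real n + 1)))
      = X * (real (2*n+1) + 1) * (1 + x * exp x / (real n + 1))"
    by (simp only: mult_ac)
  also have "\<dots> \<le> X * (15 / (1 - r^(n+1)) * (real n + 2 / (1 - r))) * (1 + x * exp (x / r) / (r * real n + r))"
    using tail assms(3)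
    by (intro mult_mono[OF mult_left_mono[OF factor assms(4)] _ mult_nonneg_nonneg[OF assms(4) factor_nonneg]])
       auto
  finally show ?thesis
    by (simp only: mult.assoc)
qed

theorem theorem2p1:
  fixes p :: "nat \<Rightarrow> complex" and n :: nat
  assumes p_bound: "\<And>j. norm (p j) \<le> 1 / (real j + 2)^2"
    and n_pos: "n \<ge> 1"
  shows "\<exists>lam :: nat \<Rightarrow> complex.
           inj_on lam {1..2*n+1} \<and> (\<forall>k\<in>{1..2*n+1}. norm (lam k) = 1) \<and>
           (\<forall>r::real. 0 < r \<and> r < 1 \<longrightarrow> (\<forall>z::complex.
              norm ((\<Sum>k=1..2*n+1. lam k * exp (lam k * z)) - (\<Sum>j. p j * z^j / of_nat (fact j)))
              \<le> norm z ^ n / fact n * (15 / (1 - r^(n+1))) * (real n + 2 / (1 - r))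
                 * (1 + norm z * exp (norm z / r) / (r * real n + r))))"
proof -
  \<comment> \<open>The argument works for \<open>n = 0\<close> as well.\<close>
  obtain lam :: "nat \<Rightarrow> complex" where "inj_on lam {1..2*n+1}" "\<forall>k\<in>{1..2*n+1}. norm (lam k) = 1"
    and bound: "\<And>z. norm ((\<Sum>k=1..2*n+1. lam k * exp (lam k * z)) - (\<Sum>j. p j * z^j / of_nat (fact j)))
      \<le> (real (2*n+1) + 1) * (norm z ^ n / fact n * (1 + norm z * exp (norm z) / (real n + 1)))"
    using exp_sum_approximation[OF p_bound] by blast
  show ?thesis
  proof (intro exI[of _ lam] conjI allI impI)
    show "inj_on lam {1..2*n+1}" "\<forall>k\<in>{1..2*n+1}. norm (lam k) = 1"
      by fact+
    fix r :: real and z :: complex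
    assume "0 < r \<and> r < 1"
    then show "norm ((\<Sum>k=1..2*n+1. lam k * exp (lam k * z)) - (\<Sum>j. p j * z^j / of_nat (fact j)))
        \<le> norm z ^ n / fact n * (15 / (1 - r^(n+1))) * (real n + 2 / (1 - r))
          * (1 + norm z * exp (norm z / r) / (r * real n + r))"
      by (intro order.trans[OF bound error_bound_weakening]) auto
  qed
qed

end
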